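(* Let $(\Omega,\mathcal{F},P,T)$ be a measure preserving system. The following are equivalent: (i) $P$ is weakly mixing; (ii) for every $r>0$, $\lim_{n\to\infty}\frac{1}{n}\sum_{i=0}^{n-1}P^r(B\cap T^{-i}C)=P^r(B)P^r(C)$ for all $B,C\in\mathcal{F}$; (iii) for all $B,C\in\mathcal{F}$, $\lim_{n\to\infty}\frac{1}{n}\sum_{i=0}^{n-1}P(B\cap T^{-i}C)=P(B)P(C)$, and there exists $r=r_{B,C}\in(0,1/2]$ such that $\lim_{n\to\infty}\frac{1}{n}\sum_{i=0}^{n-1}P^r(B\cap T^{-i}C)=P^r(B)P^r(C)$. In particular, $P$ is weakly mixing if and only if $P$ is ergodic and $\lim_{n\to\infty}\frac{1}{n}\sum_{i=0}^{n-1}P^{1/2}(B\cap T^{-i}C)=P^{1/2}(B)P^{1/2}(C)$ for all $B,C\in\mathcal{F}$.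
   Context: A measure preserving system $(\Omega,\mathcal{F},P,T)$ consists of a probability space and a measurable $T:\Omega\to\Omega$ with $P(T^{-1}A)=P(A)$ for all $A\in\mathcal{F}$. $P^r(A)$ denotes $(P(A))^r$. $P$ is ergodic if $P(A)\in\{0,1\}$ whenever $T^{-1}A=A$; weakly mixing if $P\times P$ is ergodic for $T\times T$. *)

theory Defs
  imports "HOL-Probability.Probability"
begin

definition mps :: "'a measure \<Rightarrow> ('a \<Rightarrow> 'a) \<Rightarrow> bool" where
  "mps M T \<longleftrightarrow> prob_space M \<and> T \<in> M \<rightarrow>\<^sub>M M \<and>
     (\<forall>A\<in>sets M. measure M (T -` A \<inter> space M) = measure M A)"

definition ergodic :: "'a measure \<Rightarrow> ('a \<Rightarrow> 'a) \<Rightarrow> bool" where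
  "ergodic M T \<longleftrightarrow>
     (\<forall>A\<in>sets M. T -` A \<inter> space M = A \<longrightarrow> measure M A = 0 \<or> measure M A = 1)"

definition weakly_mixing :: "'a measure \<Rightarrow> ('a \<Rightarrow> 'a) \<Rightarrow> bool" where
  "weakly_mixing M T \<longleftrightarrow> ergodic (M \<Otimes>\<^sub>M M) (\<lambda>(x, y). (T x, T y))"

definition cesaro_pow :: "'a measure \<Rightarrow> ('a \<Rightarrow> 'a) \<Rightarrow> real \<Rightarrow> 'a set \<Rightarrow> 'a set \<Rightarrow> bool" where
  "cesaro_pow M T r B C \<longleftrightarrow>
     (\<lambda>n. (\<Sum>i<n. measure M (B \<inter> ((T ^^ i) -` C \<inter> space M)) powr r) / real n)
       \<longlonglongrightarrow> (measure M B powr r) * (measure M C powr r)"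

definition cesaro :: "'a measure \<Rightarrow> ('a \<Rightarrow> 'a) \<Rightarrow> 'a set \<Rightarrow> 'a set \<Rightarrow> bool" where
  "cesaro M T B C \<longleftrightarrow>
     (\<lambda>n. (\<Sum>i<n. measure M (B \<inter> ((T ^^ i) -` C \<inter> space M))) / real n)
       \<longlonglongrightarrow> measure M B * measure M C"

end

theory Submission
  imports Defs
begin

text \<open>
  Write \<open>corr B C i = P(B \<inter> T\<^sup>-\<^sup>i C)\<close> and \<open>c = P(B) P(C)\<close>. All three conditions are
  equivalent to strong Cesaro convergence \<open>corr B C i \<rightarrow> c\<close>, i.e. to the Cesaro means of
  \<open>\<bar>corr B C i - c\<bar>\<close> tending to \<open>0\<close>, for all \<open>B\<close>, \<open>C\<close>.

  If \<open>T \<times> T\<close> is ergodic, Birkhoff's theorem for \<open>T \<times> T\<close> on \<open>B \<times> B\<close>, \<open>C \<times> C\<close> and for \<open>T\<close> on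
  \<open>B\<close>, \<open>C\<close> yields the means of \<open>corr\<^sup>2\<close> and of \<open>corr\<close>, hence that of \<open>(corr - c)\<^sup>2\<close> tends
  to \<open>0\<close>. Conversely, strong convergence is inherited by products, so Cesaro convergence
  holds on rectangles for \<open>T \<times> T\<close>, extends to the product \<open>\<sigma>\<close>-algebra by the \<open>\<pi>\<close>-\<open>\<lambda>\<close>
  theorem, and then forces every invariant set \<open>A\<close> to satisfy \<open>P(A) = P(A)\<^sup>2\<close>.

  Strong convergence passes through the continuous map \<open>x \<mapsto> x\<^sup>r\<close>, which gives (ii). To go
  back from (iii), Jensen's inequality and Cauchy-Schwarz squeeze the mean of \<open>\<surd>corr\<close>
  between \<open>(mean corr\<^sup>r)\<^sup>1\<^sup>/\<^sup>2\<^sup>r\<close> and \<open>(mean corr)\<^sup>1\<^sup>/\<^sup>2\<close>; convergence of the means of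
  \<open>\<surd>corr\<close> and \<open>corr\<close> makes the mean of \<open>(\<surd>corr - \<surd>c)\<^sup>2\<close> tend to \<open>0\<close>, and
  \<open>\<bar>a - c\<bar> \<le> 2 \<bar>\<surd>a - \<surd>c\<bar>\<close> on \<open>[0,1]\<close>. For the last equivalence, ergodicity of \<open>T\<close>
  supplies the Cesaro convergence of \<open>corr\<close> itself, via the maximal ergodic theorem.
\<close>

section \<open>Cesaro means\<close>

text \<open>The junk value \<open>x / 0 = 0\<close> makes the mean over zero terms \<open>0\<close>.\<close>
definition cesaro_mean :: "(nat \<Rightarrow> real) \<Rightarrow> nat \<Rightarrow> real" where
  "cesaro_mean f n = (\<Sum>i<n. f i) / real n"

lemma cesaro_mean_const: "n \<ge> 1 \<Longrightarrow> cesaro_mean (\<lambda>i. c) n = c"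
  unfolding cesaro_mean_def by simp

lemma cesaro_mean_add: "cesaro_mean (\<lambda>i. f i + g i) n = cesaro_mean f n + cesaro_mean g n"
  unfolding cesaro_mean_def by (simp add: sum.distrib add_divide_distrib)

lemma cesaro_mean_diff: "cesaro_mean (\<lambda>i. f i - g i) n = cesaro_mean f n - cesaro_mean g n"
  unfolding cesaro_mean_def by (simp add: sum_subtractf diff_divide_distrib)

lemma cesaro_mean_cmult: "cesaro_mean (\<lambda>i. c * f i) n = c * cesaro_mean f n"
  unfolding cesaro_mean_def by (simp add: sum_distrib_left[symmetric])

lemma cesaro_mean_mono: "(\<And>i. f i \<le> g i) \<Longrightarrow> cesaro_mean f n \<le> cesaro_mean g n"
  unfolding cesaro_mean_def by (intro divide_right_mono sum_mono) auto

lemma cesaro_mean_nonneg: "(\<And>i. 0 \<le> f i) \<Longrightarrow> 0 \<le> cesaro_mean f n"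
  unfolding cesaro_mean_def by (intro divide_nonneg_nonneg sum_nonneg) auto

lemma cesaro_mean_le_const:
  assumes "\<And>i. f i \<le> c" "0 \<le> c" shows "cesaro_mean f n \<le> c"
proof (cases "n = 0")
  case False
  then have "cesaro_mean f n \<le> cesaro_mean (\<lambda>i. c) n" by (intro cesaro_mean_mono assms)
  with False show ?thesis by (simp add: cesaro_mean_const)
qed (simp add: cesaro_mean_def assms)

lemma abs_cesaro_mean_le: "\<bar>cesaro_mean f n\<bar> \<le> cesaro_mean (\<lambda>i. \<bar>f i\<bar>) n"
  unfolding cesaro_mean_def by (auto intro!: divide_right_mono)

lemma tendsto_cesaro_mean_const: "(\<lambda>n. cesaro_mean (\<lambda>i. c) n) \<longlonglongrightarrow> c"
proof (rule tendsto_eventually)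
  show "eventually (\<lambda>n. cesaro_mean (\<lambda>i. c) n = c) sequentially"
    using eventually_ge_at_top[of 1] by eventually_elim (rule cesaro_mean_const)
qed

lemma cesaro_mean_square_le: "(cesaro_mean f n)\<^sup>2 \<le> cesaro_mean (\<lambda>i. (f i)\<^sup>2) n"
proof (cases "n = 0")
  case False
  have "(\<Sum>i<n. f i)\<^sup>2 \<le> (\<Sum>i<n. (f i)\<^sup>2) * real n"
    using sum_squared_le_sum_of_squares[of f "{..<n}"] by simp
  then show ?thesis using False unfolding cesaro_mean_def
    by (simp add: divide_simps power2_eq_square)
qed (simp add: cesaro_mean_def)

lemma convex_on_powr_nonneg:
  assumes "p \<ge> 1" shows "convex_on {0..} (\<lambda>x::real. x powr p)"
proof (rule convex_onI)
  fix t x y :: real assume t: "t > 0" "t < 1" and xy: "x \<in> {0..}" "y \<in> {0..}"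
  have scale: "(s * z) powr p \<le> s * z powr p" if "0 \<le> s" "s \<le> 1" "0 \<le> z" for s z :: real
  proof -
    have "s powr p \<le> s" using powr_le_one_le[of s p] that assms by (cases "s = 0") auto
    then show ?thesis by (simp add: powr_mult that mult_right_mono)
  qed
  show "((1 - t) *\<^sub>R x + t *\<^sub>R y) powr p \<le> (1 - t) * x powr p + t * y powr p"
  proof (cases "x = 0 \<or> y = 0")
    case True
    then show ?thesis using scale[of t y] scale[of "1 - t" x] t xy by auto
  next
    case False
    then show ?thesis using convex_onD[OF powr_convex[OF assms], of t x y] t xy by auto
  qed
qed simp

lemma cesaro_mean_powr_le:
  assumes "q \<ge> 1" and "\<And>i. 0 \<le> f i"
  shows "(cesaro_mean f n) powr q \<le> cesaro_mean (\<lambda>i. f i powr q) n"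
proof (cases "n = 0")
  case False
  have "(\<Sum>i<n. (1 / real n) *\<^sub>R f i) powr q \<le> (\<Sum>i<n. (1 / real n) * (f i powr q))"
    using False assms by (intro convex_on_sum[OF _ _ convex_on_powr_nonneg]) auto
  then show ?thesis unfolding cesaro_mean_def
    by (simp add: sum_distrib_left[symmetric] sum_divide_distrib[symmetric])
qed (simp add: cesaro_mean_def)

definition strongly_cesaro_tendsto :: "(nat \<Rightarrow> real) \<Rightarrow> real \<Rightarrow> bool" where
  "strongly_cesaro_tendsto f c \<longleftrightarrow> (\<lambda>n. cesaro_mean (\<lambda>i. \<bar>f i - c\<bar>) n) \<longlonglongrightarrow> 0"

lemma tendsto_cesaro_mean_if_strongly:
  assumes "strongly_cesaro_tendsto f c"
  shows "(\<lambda>n. cesaro_mean f n) \<longlonglongrightarrow> c"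
proof -
  have "(\<lambda>n. cesaro_mean f n - c) \<longlonglongrightarrow> 0"
  proof (rule Lim_null_comparison)
    show "eventually (\<lambda>n. norm (cesaro_mean f n - c) \<le> cesaro_mean (\<lambda>i. \<bar>f i - c\<bar>) n) sequentially"
      using eventually_ge_at_top[of 1]
    proof eventually_elim
      case (elim n)
      then have "cesaro_mean f n - c = cesaro_mean (\<lambda>i. f i - c) n"
        by (simp add: cesaro_mean_diff cesaro_mean_const)
      then show ?case using abs_cesaro_mean_le[of "\<lambda>i. f i - c" n] by simp
    qed
  qed (use assms in \<open>simp add: strongly_cesaro_tendsto_def\<close>)
  then show ?thesis by (simp add: LIM_zero_iff)
qed

lemma strongly_cesaro_tendsto_if_square:
  assumes "(\<lambda>n. cesaro_mean (\<lambda>i. (f i - c)\<^sup>2) n) \<longlonglongrightarrow> 0"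
  shows "strongly_cesaro_tendsto f c"
  unfolding strongly_cesaro_tendsto_def
proof (rule tendsto_sandwich[where f="\<lambda>n. 0" and h="\<lambda>n. sqrt (cesaro_mean (\<lambda>i. (f i - c)\<^sup>2) n)"])
  show "eventually (\<lambda>n. 0 \<le> cesaro_mean (\<lambda>i. \<bar>f i - c\<bar>) n) sequentially"
    by (intro always_eventually allI cesaro_mean_nonneg) simp
  show "eventually (\<lambda>n. cesaro_mean (\<lambda>i. \<bar>f i - c\<bar>) n \<le> sqrt (cesaro_mean (\<lambda>i. (f i - c)\<^sup>2) n)) sequentially"
    using cesaro_mean_square_le[of "\<lambda>i. \<bar>f i - c\<bar>"] by (intro always_eventually allI real_le_rsqrt) simp
  show "(\<lambda>n. sqrt (cesaro_mean (\<lambda>i. (f i - c)\<^sup>2) n)) \<longlonglongrightarrow> 0"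
    using tendsto_real_sqrt[OF assms] by simp
qed simp

lemma cesaro_mean_square_dev_tendsto_0:
  assumes "(\<lambda>n. cesaro_mean f n) \<longlonglongrightarrow> c" and "(\<lambda>n. cesaro_mean (\<lambda>i. (f i)\<^sup>2) n) \<longlonglongrightarrow> c\<^sup>2"
  shows "(\<lambda>n. cesaro_mean (\<lambda>i. (f i - c)\<^sup>2) n) \<longlonglongrightarrow> 0"
proof -
  have "(\<lambda>n. cesaro_mean (\<lambda>i. (f i)\<^sup>2) n - 2 * c * cesaro_mean f n + c\<^sup>2) \<longlonglongrightarrow> c\<^sup>2 - 2 * c * c + c\<^sup>2"
    by (intro tendsto_intros assms)
  then have "(\<lambda>n. cesaro_mean (\<lambda>i. (f i)\<^sup>2) n - 2 * c * cesaro_mean f n + c\<^sup>2) \<longlonglongrightarrow> 0"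
    by (simp add: power2_eq_square)
  moreover have "cesaro_mean (\<lambda>i. (f i)\<^sup>2) n - 2 * c * cesaro_mean f n + c\<^sup>2 = cesaro_mean (\<lambda>i. (f i - c)\<^sup>2) n"
    if "n \<ge> 1" for n
  proof -
    have "(\<lambda>i. (f i - c)\<^sup>2) = (\<lambda>i. ((f i)\<^sup>2 - (2 * c) * f i) + c\<^sup>2)"
      by (intro ext) (simp add: power2_diff mult.commute mult.left_commute)
    then show ?thesis using that by (simp add: cesaro_mean_add cesaro_mean_diff cesaro_mean_cmult cesaro_mean_const)
  qed
  ultimately show ?thesis
    by (rule Lim_transform_eventually[OF _ eventually_mono[OF eventually_ge_at_top[of 1]]])
qed

lemma strongly_cesaro_tendsto_comp:
  assumes lim: "strongly_cesaro_tendsto a c" and cont: "continuous (at c within S) \<phi>"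
    and S: "\<And>i. a i \<in> S" and bound: "\<And>x. x \<in> S \<Longrightarrow> \<bar>\<phi> x - \<phi> c\<bar> \<le> K"
  shows "strongly_cesaro_tendsto (\<lambda>i. \<phi> (a i)) (\<phi> c)"
  unfolding strongly_cesaro_tendsto_def tendsto_iff
proof (intro allI impI)
  fix e :: real assume e: "e > 0"
  obtain d where d: "d > 0" and near: "\<And>x. x \<in> S \<Longrightarrow> dist x c < d \<Longrightarrow> dist (\<phi> x) (\<phi> c) < e / 2"
    using cont e unfolding continuous_within_eps_delta by (metis half_gt_zero)
  have K: "0 \<le> K" using bound[OF S[of 0]] by linarith
  \<comment> \<open>Away from \<open>c\<close> the bound \<open>K\<close> is paid for by the mean deviation of \<open>a\<close>.\<close>
  have pointwise: "\<bar>\<phi> (a i) - \<phi> c\<bar> \<le> e / 2 + (K / d) * \<bar>a i - c\<bar>" for i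
  proof (cases "\<bar>a i - c\<bar> < d")
    case True
    then have "\<bar>\<phi> (a i) - \<phi> c\<bar> < e / 2" using near[OF S[of i]] by (simp add: dist_real_def)
    moreover have "0 \<le> (K / d) * \<bar>a i - c\<bar>" using K d by simp
    ultimately show ?thesis by linarith
  next
    case False
    have "K = (K / d) * d" using d by simp
    also have "\<dots> \<le> (K / d) * \<bar>a i - c\<bar>" using False K d by (intro mult_left_mono) auto
    finally show ?thesis using bound[OF S[of i]] e by linarith
  qed
  have "(\<lambda>n. (K / d) * cesaro_mean (\<lambda>i. \<bar>a i - c\<bar>) n) \<longlonglongrightarrow> 0"
    using lim unfolding strongly_cesaro_tendsto_def by (rule tendsto_mult_right_zero)
  then have "eventually (\<lambda>n. (K / d) * cesaro_mean (\<lambda>i. \<bar>a i - c\<bar>) n < e / 2) sequentially"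
    by (rule order_tendstoD(2)) (use e in simp)
  then show "eventually (\<lambda>n. dist (cesaro_mean (\<lambda>i. \<bar>\<phi> (a i) - \<phi> c\<bar>) n) 0 < e) sequentially"
    using eventually_ge_at_top[of 1]
  proof eventually_elim
    case (elim n)
    have "cesaro_mean (\<lambda>i. \<bar>\<phi> (a i) - \<phi> c\<bar>) n \<le> cesaro_mean (\<lambda>i. e / 2 + (K / d) * \<bar>a i - c\<bar>) n"
      by (intro cesaro_mean_mono pointwise)
    also have "\<dots> = e / 2 + (K / d) * cesaro_mean (\<lambda>i. \<bar>a i - c\<bar>) n"
      using elim(2) by (simp only: cesaro_mean_add cesaro_mean_cmult cesaro_mean_const)
    finally have "cesaro_mean (\<lambda>i. \<bar>\<phi> (a i) - \<phi> c\<bar>) n < e" using elim(1) by linarith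
    moreover have "0 \<le> cesaro_mean (\<lambda>i. \<bar>\<phi> (a i) - \<phi> c\<bar>) n" by (rule cesaro_mean_nonneg) simp
    ultimately show ?case by (simp add: dist_real_def)
  qed
qed

lemma strongly_cesaro_tendsto_mult:
  assumes "strongly_cesaro_tendsto a c" "strongly_cesaro_tendsto b d"
    and "\<And>i. \<bar>b i\<bar> \<le> K" "\<bar>c\<bar> \<le> K"
  shows "strongly_cesaro_tendsto (\<lambda>i. a i * b i) (c * d)"
  unfolding strongly_cesaro_tendsto_def
proof (rule tendsto_sandwich[where f="\<lambda>n. 0"])
  have "\<bar>a i * b i - c * d\<bar> \<le> K * \<bar>a i - c\<bar> + K * \<bar>b i - d\<bar>" for i
  proof -
    have "a i * b i - c * d = (a i - c) * b i + c * (b i - d)" by (simp add: algebra_simps)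
    then have "\<bar>a i * b i - c * d\<bar> \<le> \<bar>a i - c\<bar> * \<bar>b i\<bar> + \<bar>c\<bar> * \<bar>b i - d\<bar>"
      by (simp add: abs_mult[symmetric] abs_triangle_ineq)
    also have "\<dots> \<le> \<bar>a i - c\<bar> * K + K * \<bar>b i - d\<bar>"
      using assms(3,4) by (intro add_mono mult_left_mono mult_right_mono) auto
    finally show ?thesis by (simp add: mult.commute)
  qed
  then show "eventually (\<lambda>n. cesaro_mean (\<lambda>i. \<bar>a i * b i - c * d\<bar>) n \<le>
      K * cesaro_mean (\<lambda>i. \<bar>a i - c\<bar>) n + K * cesaro_mean (\<lambda>i. \<bar>b i - d\<bar>) n) sequentially"
    by (intro always_eventually allI) (simp add: cesaro_mean_add[symmetric] cesaro_mean_cmult[symmetric] cesaro_mean_mono)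
  show "(\<lambda>n. K * cesaro_mean (\<lambda>i. \<bar>a i - c\<bar>) n + K * cesaro_mean (\<lambda>i. \<bar>b i - d\<bar>) n) \<longlonglongrightarrow> 0"
    using tendsto_add[OF tendsto_mult_right_zero tendsto_mult_right_zero, OF assms(1,2)[unfolded strongly_cesaro_tendsto_def]]
    by simp
  show "eventually (\<lambda>n. 0 \<le> cesaro_mean (\<lambda>i. \<bar>a i * b i - c * d\<bar>) n) sequentially"
    by (intro always_eventually allI cesaro_mean_nonneg) simp
qed simp

lemma strongly_cesaro_tendsto_if_sqrt:
  assumes a: "\<And>i. 0 \<le> a i \<and> a i \<le> 1" and c: "0 \<le> c" "c \<le> 1"
    and lim: "(\<lambda>n. cesaro_mean a n) \<longlonglongrightarrow> c"
    and lim_sqrt: "(\<lambda>n. cesaro_mean (\<lambda>i. sqrt (a i)) n) \<longlonglongrightarrow> sqrt c"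
  shows "strongly_cesaro_tendsto a c"
proof -
  have sqrt: "strongly_cesaro_tendsto (\<lambda>i. sqrt (a i)) (sqrt c)"
  proof (intro strongly_cesaro_tendsto_if_square cesaro_mean_square_dev_tendsto_0 lim_sqrt)
    show "(\<lambda>n. cesaro_mean (\<lambda>i. (sqrt (a i))\<^sup>2) n) \<longlonglongrightarrow> (sqrt c)\<^sup>2" using lim a c by simp
  qed
  have pointwise: "\<bar>a i - c\<bar> \<le> 2 * \<bar>sqrt (a i) - sqrt c\<bar>" for i
  proof -
    have "a i - c = (sqrt (a i) - sqrt c) * (sqrt (a i) + sqrt c)"
      using a[of i] c by (simp add: algebra_simps)
    then have "\<bar>a i - c\<bar> = \<bar>sqrt (a i) - sqrt c\<bar> * \<bar>sqrt (a i) + sqrt c\<bar>"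
      by (simp only: abs_mult)
    also have "\<dots> \<le> \<bar>sqrt (a i) - sqrt c\<bar> * 2"
    proof (intro mult_left_mono)
      have "0 \<le> sqrt (a i)" "sqrt (a i) \<le> 1" "0 \<le> sqrt c" "sqrt c \<le> 1" using a[of i] c by auto
      then show "\<bar>sqrt (a i) + sqrt c\<bar> \<le> 2" unfolding abs_le_iff by linarith
    qed simp
    finally show ?thesis by simp
  qed
  show ?thesis unfolding strongly_cesaro_tendsto_def
  proof (rule tendsto_sandwich[where f="\<lambda>n. 0" and h="\<lambda>n. 2 * cesaro_mean (\<lambda>i. \<bar>sqrt (a i) - sqrt c\<bar>) n"])
    show "eventually (\<lambda>n. 0 \<le> cesaro_mean (\<lambda>i. \<bar>a i - c\<bar>) n) sequentially"
      by (intro always_eventually allI cesaro_mean_nonneg) simp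
    show "eventually (\<lambda>n. cesaro_mean (\<lambda>i. \<bar>a i - c\<bar>) n \<le> 2 * cesaro_mean (\<lambda>i. \<bar>sqrt (a i) - sqrt c\<bar>) n) sequentially"
      using pointwise by (intro always_eventually allI) (simp add: cesaro_mean_cmult[symmetric] cesaro_mean_mono)
    show "(\<lambda>n. 2 * cesaro_mean (\<lambda>i. \<bar>sqrt (a i) - sqrt c\<bar>) n) \<longlonglongrightarrow> 0"
      using tendsto_mult_right_zero[OF sqrt[unfolded strongly_cesaro_tendsto_def], of 2] .
  qed simp
qed

text \<open>Jensen's inequality bounds the mean of \<open>\<surd>a\<close> from below by that of \<open>a powr r\<close>, and
  Cauchy-Schwarz bounds it from above by that of \<open>a\<close>.\<close>
lemma cesaro_sqrt_tendsto_if_powr: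
  assumes a: "\<And>i. 0 \<le> a i" and c: "0 \<le> c" and r: "0 < r" "r \<le> 1/2"
    and lim: "(\<lambda>n. cesaro_mean a n) \<longlonglongrightarrow> c"
    and lim_powr: "(\<lambda>n. cesaro_mean (\<lambda>i. a i powr r) n) \<longlonglongrightarrow> c powr r"
  shows "(\<lambda>n. cesaro_mean (\<lambda>i. sqrt (a i)) n) \<longlonglongrightarrow> sqrt c"
proof (rule tendsto_sandwich[where f="\<lambda>n. (cesaro_mean (\<lambda>i. a i powr r) n) powr (1 / (2 * r))"
      and h="\<lambda>n. sqrt (cesaro_mean a n)"])
  have q: "1 / (2 * r) \<ge> 1" using r by (simp add: field_simps)
  have "(cesaro_mean (\<lambda>i. a i powr r) n) powr (1 / (2 * r)) \<le> cesaro_mean (\<lambda>i. sqrt (a i)) n" for n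
  proof -
    have "(cesaro_mean (\<lambda>i. a i powr r) n) powr (1 / (2 * r))
        \<le> cesaro_mean (\<lambda>i. (a i powr r) powr (1 / (2 * r))) n"
      by (rule cesaro_mean_powr_le[OF q]) simp
    also have "(\<lambda>i. (a i powr r) powr (1 / (2 * r))) = (\<lambda>i. sqrt (a i))"
      using a r by (simp add: powr_powr powr_half_sqrt)
    finally show ?thesis .
  qed
  then show "eventually (\<lambda>n. (cesaro_mean (\<lambda>i. a i powr r) n) powr (1 / (2 * r))
      \<le> cesaro_mean (\<lambda>i. sqrt (a i)) n) sequentially"
    by (intro always_eventually allI)
  have "(cesaro_mean (\<lambda>i. sqrt (a i)) n)\<^sup>2 \<le> cesaro_mean a n" for n
    using cesaro_mean_square_le[of "\<lambda>i. sqrt (a i)" n] a by simp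
  then show "eventually (\<lambda>n. cesaro_mean (\<lambda>i. sqrt (a i)) n \<le> sqrt (cesaro_mean a n)) sequentially"
    by (intro always_eventually allI real_le_rsqrt)
  show "(\<lambda>n. sqrt (cesaro_mean a n)) \<longlonglongrightarrow> sqrt c" by (intro tendsto_intros lim)
  have "(\<lambda>n. (cesaro_mean (\<lambda>i. a i powr r) n) powr (1 / (2 * r))) \<longlonglongrightarrow> (c powr r) powr (1 / (2 * r))"
    using r by (intro tendsto_powr2[OF lim_powr tendsto_const] always_eventually allI cesaro_mean_nonneg) auto
  also have "(c powr r) powr (1 / (2 * r)) = sqrt c" using r c by (simp add: powr_powr powr_half_sqrt)
  finally show "(\<lambda>n. (cesaro_mean (\<lambda>i. a i powr r) n) powr (1 / (2 * r))) \<longlonglongrightarrow> sqrt c" .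
qed

lemma LIMSEQ_if_uniform_approx:
  fixes a :: "nat \<Rightarrow> real"
  assumes "\<And>e. e > 0 \<Longrightarrow> \<exists>b. b \<longlonglongrightarrow> L \<and> (\<forall>n. \<bar>a n - b n\<bar> \<le> e)"
  shows "a \<longlonglongrightarrow> L"
proof (rule LIMSEQ_I)
  fix r :: real assume r: "r > 0"
  obtain b where b: "b \<longlonglongrightarrow> L" and close: "\<And>n. \<bar>a n - b n\<bar> \<le> r / 2"
    using assms[of "r / 2"] r by auto
  obtain N where N: "\<And>n. n \<ge> N \<Longrightarrow> \<bar>b n - L\<bar> < r / 2"
    using LIMSEQ_D[OF b, of "r / 2"] r by auto
  have "\<bar>a n - L\<bar> < r" if "n \<ge> N" for n
    using close[of n] N[OF that] by linarith
  then show "\<exists>N. \<forall>n\<ge>N. norm (a n - L) < r" by auto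
qed

section \<open>Cesaro convergence of additive set functions\<close>

locale dominated_additive = prob_space M for M :: "'a measure" +
  fixes F :: "'a set \<Rightarrow> nat \<Rightarrow> real" and m :: "'a set \<Rightarrow> real"
  assumes F_Un: "\<And>A B i. A \<in> sets M \<Longrightarrow> B \<in> sets M \<Longrightarrow> A \<inter> B = {} \<Longrightarrow> F (A \<union> B) i = F A i + F B i"
    and m_Un: "\<And>A B. A \<in> sets M \<Longrightarrow> B \<in> sets M \<Longrightarrow> A \<inter> B = {} \<Longrightarrow> m (A \<union> B) = m A + m B"
    and F_bound: "\<And>A i. A \<in> sets M \<Longrightarrow> \<bar>F A i\<bar> \<le> prob A"
    and m_bound: "\<And>A. A \<in> sets M \<Longrightarrow> \<bar>m A\<bar> \<le> prob A"
begin

abbreviation cesaro_converges :: "'a set \<Rightarrow> bool" where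
  "cesaro_converges A \<equiv> (\<lambda>n. cesaro_mean (F A) n) \<longlonglongrightarrow> m A"

lemma cesaro_converges_empty: "cesaro_converges {}"
proof -
  have "F {} = (\<lambda>i. 0)" "m {} = 0" using F_bound[of "{}"] m_bound[of "{}"] by auto
  then show ?thesis using tendsto_cesaro_mean_const[of 0] by simp
qed

lemma cesaro_converges_Un:
  assumes "A \<in> sets M" "B \<in> sets M" "A \<inter> B = {}" "cesaro_converges A" "cesaro_converges B"
  shows "cesaro_converges (A \<union> B)"
proof -
  have "F (A \<union> B) = (\<lambda>i. F A i + F B i)" using F_Un assms(1-3) by auto
  then show ?thesis using tendsto_add[OF assms(4,5)] assms(1-3) by (simp add: m_Un cesaro_mean_add)
qed

lemma cesaro_converges_compl:
  assumes A: "A \<in> sets M" and conv: "cesaro_converges (space M)" "cesaro_converges A"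
  shows "cesaro_converges (space M - A)"
proof -
  have split: "space M = A \<union> (space M - A)" "A \<inter> (space M - A) = {}"
    using sets.sets_into_space[OF A] by auto
  have "F (space M - A) = (\<lambda>i. F (space M) i - F A i)"
    using F_Un[OF A _ split(2)] A by (subst (2) split(1)) auto
  moreover have "m (space M - A) = m (space M) - m A"
    using m_Un[OF A _ split(2)] A by (subst (2) split(1)) auto
  ultimately show ?thesis
    using tendsto_diff[OF conv] by (simp add: cesaro_mean_diff)
qed

lemma abs_cesaro_mean_le_prob: "A \<in> sets M \<Longrightarrow> \<bar>cesaro_mean (F A) n\<bar> \<le> prob A"
  using abs_cesaro_mean_le[of "F A" n] cesaro_mean_le_const[of "\<lambda>i. \<bar>F A i\<bar>" "prob A" n] F_bound
  by (meson measure_nonneg order_trans)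

lemma cesaro_converges_finite_UN:
  fixes A :: "nat \<Rightarrow> 'a set"
  assumes A: "range A \<subseteq> sets M" "disjoint_family A" and conv: "\<And>i. cesaro_converges (A i)"
  shows "cesaro_converges (\<Union>i<K. A i)"
proof (induction K)
  case (Suc K)
  have "(\<Union>i<Suc K. A i) = (\<Union>i<K. A i) \<union> A K" "(\<Union>i<K. A i) \<inter> A K = {}"
    using A(2) by (auto simp: lessThan_Suc disjoint_family_on_def) (metis disjoint_iff less_irrefl)
  moreover have "(\<Union>i<K. A i) \<in> sets M" using A(1) by auto
  ultimately show ?case using cesaro_converges_Un[OF _ _ _ Suc conv] A(1) by auto
qed (simp add: cesaro_converges_empty)

text \<open>A countable disjoint union is approximated, uniformly in \<open>n\<close>, by its finite partial unions.\<close>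
lemma cesaro_converges_UN:
  fixes A :: "nat \<Rightarrow> 'a set"
  assumes A: "range A \<subseteq> sets M" "disjoint_family A" and conv: "\<And>i. cesaro_converges (A i)"
  shows "cesaro_converges (\<Union>i. A i)"
proof -
  define U where "U K = (\<Union>i<K. A i)" for K
  have U_sets: "U K \<in> sets M" for K using A(1) unfolding U_def by auto
  have conv_U: "cesaro_converges (U K)" for K
    unfolding U_def using A conv by (rule cesaro_converges_finite_UN)
  let ?U = "\<Union>i. A i"
  have U_sub: "U K \<subseteq> ?U" for K unfolding U_def by auto
  have "(\<lambda>K. prob (U K)) \<longlonglongrightarrow> prob (\<Union>K. U K)"
    using U_sets by (intro finite_Lim_measure_incseq) (auto simp: incseq_def U_def intro: less_le_trans)
  moreover have "(\<Union>K. U K) = ?U" by (auto simp: U_def)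
  ultimately have "(\<lambda>K. prob ?U - prob (U K)) \<longlonglongrightarrow> prob ?U - prob ?U"
    by (intro tendsto_diff tendsto_const) simp
  then have tail: "(\<lambda>K. prob (?U - U K)) \<longlonglongrightarrow> 0"
    using U_sets A(1) U_sub by (subst finite_measure_Diff) auto
  show ?thesis
  proof (rule LIMSEQ_if_uniform_approx)
    fix e :: real assume "e > 0"
    then obtain K where "\<forall>k\<ge>K. norm (prob (?U - U k) - 0) < e / 2"
      using LIMSEQ_D[OF tail, of "e / 2"] by auto
    then have K: "prob (?U - U K) \<le> e / 2" by auto
    have D: "?U - U K \<in> sets M" "U K \<inter> (?U - U K) = {}" "U K \<union> (?U - U K) = ?U"
      using U_sets A(1) U_sub[of K] by auto
    have "(\<lambda>n. cesaro_mean (F (U K)) n + m (?U - U K)) \<longlonglongrightarrow> m (U K) + m (?U - U K)"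
      using conv_U[of K] by (intro tendsto_add tendsto_const)
    moreover have "m (U K) + m (?U - U K) = m ?U" using m_Un[OF U_sets D(1,2)] D(3) by simp
    moreover have "\<bar>cesaro_mean (F ?U) n - (cesaro_mean (F (U K)) n + m (?U - U K))\<bar> \<le> e" for n
    proof -
      have "F ?U = (\<lambda>i. F (U K) i + F (?U - U K) i)" using F_Un[OF U_sets D(1,2)] D(3) by auto
      then have "cesaro_mean (F ?U) n - (cesaro_mean (F (U K)) n + m (?U - U K))
          = cesaro_mean (F (?U - U K)) n - m (?U - U K)" by (simp add: cesaro_mean_add)
      then show ?thesis using abs_cesaro_mean_le_prob[OF D(1), of n] m_bound[OF D(1)] K by linarith
    qed
    ultimately show "\<exists>b. b \<longlonglongrightarrow> m ?U \<and> (\<forall>n. \<bar>cesaro_mean (F ?U) n - b n\<bar> \<le> e)" by auto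
  qed
qed

lemma cesaro_converges_sigma_sets:
  assumes G: "Int_stable G" "G \<subseteq> Pow (space M)" "sets M = sigma_sets (space M) G" "space M \<in> G"
    and base: "\<And>A. A \<in> G \<Longrightarrow> cesaro_converges A" and A: "A \<in> sets M"
  shows "cesaro_converges A"
proof -
  from A G(3) have "A \<in> sigma_sets (space M) G" by simp
  then show ?thesis
  proof (rule sigma_sets_induct_disjoint[OF G(1,2)])
    fix A assume "A \<in> sigma_sets (space M) G" "cesaro_converges A"
    then show "cesaro_converges (space M - A)" using cesaro_converges_compl base[OF G(4)] G(3) by simp
  next
    fix A :: "nat \<Rightarrow> 'a set"
    assume "disjoint_family A" "range A \<subseteq> sigma_sets (space M) G" "\<And>i. cesaro_converges (A i)"
    then show "cesaro_converges (\<Union>i. A i)" using cesaro_converges_UN G(3) by simp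
  qed (auto intro: base cesaro_converges_empty)
qed

end

section \<open>Measure preserving systems\<close>

locale mpt = prob_space M for M :: "'a measure" +
  fixes T :: "'a \<Rightarrow> 'a"
  assumes T_measurable[measurable]: "T \<in> M \<rightarrow>\<^sub>M M"
    and measure_preimage: "A \<in> sets M \<Longrightarrow> measure M (T -` A \<inter> space M) = measure M A"

lemma mpt_iff_mps: "mpt M T \<longleftrightarrow> mps M T"
  unfolding mps_def mpt_def mpt_axioms_def by auto

context mpt
begin

lemma distr_T: "distr M M T = M"
proof (rule measure_eqI)
  fix A assume "A \<in> sets (distr M M T)"
  then show "emeasure (distr M M T) A = emeasure M A"
    using measure_preimage[of A] by (simp add: emeasure_distr emeasure_eq_measure)
qed simp

lemma funpow_measurable[measurable]: "T ^^ n \<in> M \<rightarrow>\<^sub>M M"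
  by (rule measurable_compose_n[OF T_measurable])

lemma funpow_in_space: "x \<in> space M \<Longrightarrow> (T ^^ n) x \<in> space M"
  using measurable_space[OF funpow_measurable] by blast

lemma distr_funpow: "distr M M (T ^^ n) = M"
proof (induction n)
  case (Suc n)
  have "distr M M (T ^^ Suc n) = distr (distr M M (T ^^ n)) M T"
    by (simp add: distr_distr)
  then show ?case using Suc distr_T by (simp add: comp_def)
qed (simp add: distr_id2[symmetric] id_def)

lemma measure_funpow_preimage: "A \<in> sets M \<Longrightarrow> prob ((T ^^ n) -` A \<inter> space M) = prob A"
  using measure_distr[of "T ^^ n" M M A] by (simp add: distr_funpow)

lemma integral_comp_T:
  fixes g :: "'a \<Rightarrow> real"
  assumes "g \<in> borel_measurable M"
  shows "(\<integral>x. g (T x) \<partial>M) = (\<integral>x. g x \<partial>M)"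
  using integral_distr[OF T_measurable assms] by (simp add: distr_T)

lemma funpow_in_invariant_iff:
  assumes "T -` E \<inter> space M = E" "x \<in> space M"
  shows "(T ^^ i) x \<in> E \<longleftrightarrow> x \<in> E"
proof (induction i)
  case (Suc i)
  have "(T ^^ i) x \<in> space M" using funpow_in_space assms(2) by simp
  then have "(T ^^ Suc i) x \<in> E \<longleftrightarrow> (T ^^ i) x \<in> T -` E \<inter> space M" by simp
  then show ?case using Suc assms(1) by simp
qed simp

definition corr :: "'a set \<Rightarrow> 'a set \<Rightarrow> nat \<Rightarrow> real" where
  "corr X Y i = prob (X \<inter> ((T ^^ i) -` Y \<inter> space M))"

lemma cesaro_iff_corr: "cesaro M T X Y \<longleftrightarrow> (\<lambda>n. cesaro_mean (corr X Y) n) \<longlonglongrightarrow> prob X * prob Y"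
  unfolding cesaro_def cesaro_mean_def corr_def ..

lemma cesaro_pow_iff_corr:
  "cesaro_pow M T r X Y \<longleftrightarrow> (\<lambda>n. cesaro_mean (\<lambda>i. corr X Y i powr r) n) \<longlonglongrightarrow> (prob X * prob Y) powr r"
  unfolding cesaro_pow_def cesaro_mean_def corr_def by (simp add: powr_mult)

lemma corr_nonneg: "0 \<le> corr X Y i"
  unfolding corr_def by simp

lemma corr_le_left: "X \<in> sets M \<Longrightarrow> corr X Y i \<le> prob X"
  unfolding corr_def by (intro finite_measure_mono) auto

lemma corr_le_right:
  assumes "Y \<in> sets M" shows "corr X Y i \<le> prob Y"
proof -
  have "corr X Y i \<le> prob ((T ^^ i) -` Y \<inter> space M)"
    unfolding corr_def using assms by (intro finite_measure_mono) auto
  then show ?thesis using measure_funpow_preimage[OF assms] by simp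
qed

lemma corr_le_1: "X \<in> sets M \<Longrightarrow> corr X Y i \<le> 1"
  using corr_le_left[of X Y i] prob_le_1[of X] by linarith

lemma corr_Un_left:
  "A \<in> sets M \<Longrightarrow> B \<in> sets M \<Longrightarrow> A \<inter> B = {} \<Longrightarrow> Y \<in> sets M \<Longrightarrow> corr (A \<union> B) Y i = corr A Y i + corr B Y i"
  unfolding corr_def by (subst finite_measure_Union[symmetric]) (auto intro!: arg_cong[where f=prob])

lemma corr_Un_right:
  "A \<in> sets M \<Longrightarrow> B \<in> sets M \<Longrightarrow> A \<inter> B = {} \<Longrightarrow> X \<in> sets M \<Longrightarrow> corr X (A \<union> B) i = corr X A i + corr X B i"
  unfolding corr_def by (subst finite_measure_Union[symmetric]) (auto intro!: arg_cong[where f=prob])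

text \<open>By the \<open>\<pi>\<close>-\<open>\<lambda>\<close> theorem, applied to each argument of \<open>corr\<close> in turn.\<close>
lemma cesaro_if_cesaro_on_generator:
  assumes G: "Int_stable G" "G \<subseteq> Pow (space M)" "sets M = sigma_sets (space M) G" "space M \<in> G"
    and base: "\<And>X Y. X \<in> G \<Longrightarrow> Y \<in> G \<Longrightarrow> cesaro M T X Y"
    and X: "X \<in> sets M" and Y: "Y \<in> sets M"
  shows "cesaro M T X Y"
proof -
  have G_sets: "A \<in> G \<Longrightarrow> A \<in> sets M" for A using G(3) by auto
  have left: "cesaro M T X' Y'" if X': "X' \<in> sets M" and Y': "Y' \<in> G" for X' Y'
  proof -
    interpret dominated_additive M "\<lambda>X. corr X Y'" "\<lambda>X. prob X * prob Y'"
      using G_sets[OF Y'] by unfold_locales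
        (auto simp: corr_Un_left corr_nonneg corr_le_left finite_measure_Union distrib_right mult_left_le)
    show ?thesis
      using cesaro_converges_sigma_sets[OF G _ X'] base Y' unfolding cesaro_iff_corr by blast
  qed
  interpret dominated_additive M "corr X" "\<lambda>Y. prob X * prob Y"
    using X by unfold_locales
      (auto simp: corr_Un_right corr_nonneg corr_le_right finite_measure_Union distrib_left mult_left_le_one_le)
  show ?thesis
    using cesaro_converges_sigma_sets[OF G _ Y] left X unfolding cesaro_iff_corr by blast
qed

lemma invariant_trivial_if_cesaro:
  assumes A: "A \<in> sets M" and inv: "T -` A \<inter> space M = A" and "cesaro M T A A"
  shows "prob A = 0 \<or> prob A = 1"
proof -
  have "corr A A = (\<lambda>i. prob A)"
    using funpow_in_invariant_iff[OF inv] sets.sets_into_space[OF A]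
    by (auto simp: corr_def fun_eq_iff intro!: arg_cong[where f=prob])
  then have "prob A = prob A * prob A"
    using LIMSEQ_unique[OF tendsto_cesaro_mean_const] assms(3) unfolding cesaro_iff_corr by metis
  then show ?thesis by (metis mult_cancel_left1)
qed

section \<open>The maximal ergodic theorem and visit frequencies\<close>

definition birkhoff_sum :: "('a \<Rightarrow> real) \<Rightarrow> nat \<Rightarrow> 'a \<Rightarrow> real" where
  "birkhoff_sum g n x = (\<Sum>i<n. g ((T ^^ i) x))"

lemma birkhoff_sum_measurable[measurable]:
  assumes [measurable]: "g \<in> borel_measurable M" shows "birkhoff_sum g n \<in> borel_measurable M"
  unfolding birkhoff_sum_def by measurable

lemma birkhoff_sum_Suc: "birkhoff_sum g (Suc n) x = g x + birkhoff_sum g n (T x)"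
  unfolding birkhoff_sum_def sum.lessThan_Suc_shift by (simp add: funpow_swap1)

lemma abs_birkhoff_sum_le:
  assumes "\<And>x. x \<in> space M \<Longrightarrow> \<bar>g x\<bar> \<le> K" "x \<in> space M"
  shows "\<bar>birkhoff_sum g n x\<bar> \<le> real n * K"
proof -
  have "\<bar>birkhoff_sum g n x\<bar> \<le> (\<Sum>i<n. \<bar>g ((T ^^ i) x)\<bar>)" unfolding birkhoff_sum_def by (rule sum_abs)
  also have "\<dots> \<le> (\<Sum>i<n. K)" by (intro sum_mono assms funpow_in_space)
  finally show ?thesis by simp
qed

definition birkhoff_max :: "('a \<Rightarrow> real) \<Rightarrow> nat \<Rightarrow> 'a \<Rightarrow> real" where
  "birkhoff_max g N x = Max ((\<lambda>k. birkhoff_sum g k x) ` {..N})"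

lemma birkhoff_max_measurable[measurable]:
  assumes [measurable]: "g \<in> borel_measurable M" shows "birkhoff_max g N \<in> borel_measurable M"
  unfolding birkhoff_max_def by measurable

lemma birkhoff_max_ge: "k \<le> N \<Longrightarrow> birkhoff_sum g k x \<le> birkhoff_max g N x"
  unfolding birkhoff_max_def by (intro Max_ge) auto

lemma birkhoff_max_attained: "\<exists>k\<le>N. birkhoff_max g N x = birkhoff_sum g k x"
proof -
  have "birkhoff_max g N x \<in> (\<lambda>k. birkhoff_sum g k x) ` {..N}"
    unfolding birkhoff_max_def by (intro Max_in) auto
  then show ?thesis by auto
qed

lemma birkhoff_max_nonneg: "0 \<le> birkhoff_max g N x"
  using birkhoff_max_ge[of 0 N g x] by (simp add: birkhoff_sum_def)

text \<open>A positive maximum is attained at some \<open>k \<ge> 1\<close>, and \<open>S\<^sub>k x = g x + S\<^sub>k\<^sub>-\<^sub>1 (T x)\<close>.\<close>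
lemma birkhoff_max_le_T:
  assumes "0 < birkhoff_max g N x"
  shows "birkhoff_max g N x \<le> g x + birkhoff_max g N (T x)"
proof -
  obtain k where k: "k \<le> N" "birkhoff_max g N x = birkhoff_sum g k x"
    using birkhoff_max_attained by blast
  with assms obtain j where "k = Suc j" by (cases k) (auto simp: birkhoff_sum_def)
  then show ?thesis using k birkhoff_max_ge[of j N g "T x"] by (simp add: birkhoff_sum_Suc)
qed

text \<open>Garsia's proof: \<open>max\<^sub>k\<^sub>\<le>\<^sub>N S\<^sub>k - (max\<^sub>k\<^sub>\<le>\<^sub>N S\<^sub>k) \<circ> T\<close> has integral zero and is bounded by
  \<open>g\<close> on the set where the maximum is positive, and by \<open>0\<close> elsewhere.\<close>
lemma maximal_ergodic_finite:
  fixes g :: "'a \<Rightarrow> real"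
  assumes g[measurable]: "g \<in> borel_measurable M" and bound: "\<And>x. x \<in> space M \<Longrightarrow> \<bar>g x\<bar> \<le> K"
  shows "0 \<le> (\<integral>x\<in>{x \<in> space M. \<exists>k\<le>N. 0 < birkhoff_sum g k x}. g x \<partial>M)"
proof -
  let ?S = "birkhoff_max g N" and ?P = "{x \<in> space M. 0 < birkhoff_max g N x}"
  have "(\<exists>k\<le>N. 0 < birkhoff_sum g k x) \<longleftrightarrow> 0 < ?S x" for x
    using birkhoff_max_ge[of _ N g x] birkhoff_max_attained[of N g x] by (auto intro: less_le_trans)
  then have P: "{x \<in> space M. \<exists>k\<le>N. 0 < birkhoff_sum g k x} = ?P" by auto
  have K: "0 \<le> K" using bound[of "SOME x. x \<in> space M"] not_empty
    by (metis abs_ge_zero order_trans some_in_eq)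
  have S_bound: "\<bar>?S x\<bar> \<le> real N * K" if "x \<in> space M" for x
  proof -
    obtain k where k: "k \<le> N" "?S x = birkhoff_sum g k x" using birkhoff_max_attained by blast
    then have "\<bar>?S x\<bar> \<le> real k * K" using abs_birkhoff_sum_le[OF bound that] by simp
    also have "\<dots> \<le> real N * K" using k(1) K by (intro mult_right_mono) auto
    finally show ?thesis .
  qed
  have int: "integrable M ?S" "integrable M (\<lambda>x. ?S (T x))"
    by (auto intro!: integrable_const_bound[where B="real N * K"] S_bound measurable_space[OF T_measurable])
  have "0 = (\<integral>x. ?S x \<partial>M) - (\<integral>x. ?S (T x) \<partial>M)"
    using integral_comp_T[of ?S] by simp
  also have "\<dots> = (\<integral>x. ?S x - ?S (T x) \<partial>M)" using int by simp
  also have "\<dots> \<le> (\<integral>x. indicator ?P x * g x \<partial>M)"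
  proof (rule integral_mono)
    show "integrable M (\<lambda>x. indicator ?P x * g x)"
      by (rule integrable_const_bound[where B=K]) (auto simp: bound indicator_def K)
    show "?S x - ?S (T x) \<le> indicator ?P x * g x" if "x \<in> space M" for x
      using birkhoff_max_le_T[of g N x] birkhoff_max_nonneg[of g N "T x"] that
      by (cases "0 < ?S x") simp_all
  qed (use int in auto)
  finally show ?thesis unfolding P set_lebesgue_integral_def by simp
qed

lemma maximal_ergodic:
  fixes g :: "'a \<Rightarrow> real"
  assumes g[measurable]: "g \<in> borel_measurable M" and bound: "\<And>x. x \<in> space M \<Longrightarrow> \<bar>g x\<bar> \<le> K"
  shows "0 \<le> (\<integral>x\<in>{x \<in> space M. \<exists>n. 0 < birkhoff_sum g n x}. g x \<partial>M)"
proof -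
  define A where "A N = {x \<in> space M. \<exists>k\<le>N. 0 < birkhoff_sum g k x}" for N
  have [measurable]: "A N \<in> sets M" for N unfolding A_def by measurable
  have "incseq A" unfolding incseq_def A_def by (blast intro: order_trans)
  moreover have "(\<Union>N. A N) = {x \<in> space M. \<exists>n. 0 < birkhoff_sum g n x}" by (auto simp: A_def)
  moreover have "set_integrable M (\<Union>N. A N) g"
    unfolding set_integrable_def using bound
    by (intro integrable_mult_indicator integrable_const_bound[where B=K]) auto
  ultimately have "(\<lambda>N. (\<integral>x\<in>A N. g x \<partial>M)) \<longlonglongrightarrow> (\<integral>x\<in>{x \<in> space M. \<exists>n. 0 < birkhoff_sum g n x}. g x \<partial>M)"
    using set_integral_cont_up[of A M g] by simp
  then show ?thesis
    by (rule LIMSEQ_le_const) (auto simp: A_def intro: maximal_ergodic_finite[OF g bound])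
qed

definition visit_freq :: "'a set \<Rightarrow> 'a \<Rightarrow> nat \<Rightarrow> real" where
  "visit_freq C x n = birkhoff_sum (indicator C) n x / real n"

lemma visit_freq_measurable[measurable]:
  assumes [measurable]: "C \<in> sets M" shows "(\<lambda>x. visit_freq C x n) \<in> borel_measurable M"
  unfolding visit_freq_def by measurable

lemma visit_freq_eq_cesaro_mean: "visit_freq C x n = cesaro_mean (\<lambda>i. indicator C ((T ^^ i) x)) n"
  unfolding visit_freq_def birkhoff_sum_def cesaro_mean_def ..

lemma visit_freq_nonneg: "0 \<le> visit_freq C x n"
  unfolding visit_freq_eq_cesaro_mean by (intro cesaro_mean_nonneg) simp

lemma visit_freq_le_1: "visit_freq C x n \<le> 1"
  unfolding visit_freq_eq_cesaro_mean by (intro cesaro_mean_le_const) simp_all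

lemma limsup_visit_freq_T:
  "limsup (\<lambda>n. ereal (visit_freq C (T x) n)) = limsup (\<lambda>n. ereal (visit_freq C x n))"
proof -
  define d where "d n = visit_freq C (T x) n - visit_freq C x (Suc n)" for n
  have "\<bar>d n\<bar> \<le> 1 / real n" if "n \<ge> 1" for n
  proof -
    have "real (Suc n) * visit_freq C x (Suc n) = indicator C x + real n * visit_freq C (T x) n"
      using that by (simp add: visit_freq_def birkhoff_sum_Suc)
    then have "d n = (visit_freq C x (Suc n) - indicator C x) / real n"
      using that by (simp add: d_def field_simps)
    moreover have "\<bar>visit_freq C x (Suc n) - indicator C x\<bar> \<le> 1"
      using visit_freq_nonneg[of C x] visit_freq_le_1[of C x] by (auto simp: indicator_def)
    ultimately show ?thesis using that by (simp add: divide_right_mono)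
  qed
  then have "d \<longlonglongrightarrow> 0"
    by (intro Lim_null_comparison[OF _ lim_const_over_n[of 1]] eventually_mono[OF eventually_ge_at_top[of 1]]) auto
  then have "limsup (\<lambda>n. ereal (d n) + ereal (visit_freq C x (n + 1))) = 0 + limsup (\<lambda>n. ereal (visit_freq C x (n + 1)))"
    by (intro ereal_limsup_lim_add) (simp_all add: zero_ereal_def)
  then show ?thesis using limsup_shift[of "\<lambda>n. ereal (visit_freq C x n)"] by (simp add: d_def)
qed

lemma birkhoff_sum_pos_if_limsup_visit_freq_gt:
  assumes "ereal a < limsup (\<lambda>n. ereal (visit_freq C x n))" "0 \<le> a"
  shows "\<exists>n. 0 < birkhoff_sum (\<lambda>x. indicator C x - a) n x"
proof -
  have "\<exists>n. a < visit_freq C x n"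
  proof (rule ccontr)
    assume "\<nexists>n. a < visit_freq C x n"
    then have "limsup (\<lambda>n. ereal (visit_freq C x n)) \<le> a" by (intro Limsup_bounded) (auto simp: not_less)
    with assms(1) show False by (blast dest: leD)
  qed
  then obtain n where n: "a < visit_freq C x n" by blast
  have "n \<noteq> 0"
  proof
    assume "n = 0"
    with n assms(2) show False by (simp add: visit_freq_def)
  qed
  have "birkhoff_sum (\<lambda>x. indicator C x - a) n x = real n * (visit_freq C x n - a)"
    using \<open>n \<noteq> 0\<close> by (simp add: visit_freq_def birkhoff_sum_def sum_subtractf algebra_simps)
  also have "\<dots> > 0" using n \<open>n \<noteq> 0\<close> by simp
  finally show ?thesis by blast
qed

lemma integral_indicator_visit_freq:
  assumes [measurable]: "B \<in> sets M" "C \<in> sets M"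
  shows "(\<integral>x. indicator B x * visit_freq C x n \<partial>M) = cesaro_mean (corr B C) n"
proof -
  have "(\<integral>x. indicator B x * visit_freq C x n \<partial>M)
      = (\<integral>x. (\<Sum>i<n. indicator (B \<inter> ((T ^^ i) -` C \<inter> space M)) x) / real n \<partial>M)"
    by (intro Bochner_Integration.integral_cong refl)
       (auto simp: visit_freq_def birkhoff_sum_def indicator_def sum_distrib_left)
  also have "\<dots> = (\<Sum>i<n. (\<integral>x. indicator (B \<inter> ((T ^^ i) -` C \<inter> space M)) x \<partial>M)) / real n"
    by (subst Bochner_Integration.integral_sum[symmetric])
       (auto simp: less_top[symmetric])
  also have "\<dots> = cesaro_mean (corr B C) n"
    by (simp add: cesaro_mean_def corr_def)
  finally show ?thesis .
qed

end

locale ergodic_mpt = mpt +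
  assumes ergodic: "ergodic M T"
begin

lemma AE_limsup_visit_freq_le:
  assumes C[measurable]: "C \<in> sets M" and a: "prob C < a"
  shows "AE x in M. limsup (\<lambda>n. ereal (visit_freq C x n)) \<le> a"
proof -
  define E where "E = {x \<in> space M. ereal a < limsup (\<lambda>n. ereal (visit_freq C x n))}"
  have E[measurable]: "E \<in> sets M" unfolding E_def by measurable
  have "T -` E \<inter> space M = E"
    using limsup_visit_freq_T measurable_space[OF T_measurable] unfolding E_def by auto
  then have E_trivial: "prob E = 0 \<or> prob E = 1" using ergodic E unfolding ergodic_def by blast
  let ?g = "\<lambda>x. indicator C x - a" and ?P = "{x \<in> space M. \<exists>n. 0 < birkhoff_sum (\<lambda>x. indicator C x - a) n x}"
  have "0 \<le> a" using a measure_nonneg[of M C] by linarith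
  then have "E \<subseteq> ?P" unfolding E_def using birkhoff_sum_pos_if_limsup_visit_freq_gt by blast
  have "prob E \<noteq> 1"
  proof
    assume "prob E = 1"
    then have "AE x in M. x \<in> E" by (rule AE_prob_1)
    then have "AE x in M. x \<in> ?P" by eventually_elim (use \<open>E \<subseteq> ?P\<close> in blast)
    then have "(\<integral>x\<in>?P. ?g x \<partial>M) = (\<integral>x. ?g x \<partial>M)"
      unfolding set_lebesgue_integral_def by (intro integral_cong_AE) auto
    also have "\<dots> = (\<integral>x. indicator C x \<partial>M) - (\<integral>x. a \<partial>M)"
      by (intro Bochner_Integration.integral_diff) (auto simp: less_top[symmetric])
    also have "\<dots> = prob C - a" by (simp add: prob_space)
    moreover have "0 \<le> (\<integral>x\<in>?P. ?g x \<partial>M)"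
      by (rule maximal_ergodic[of ?g "1 + \<bar>a\<bar>"]) (auto simp: indicator_def)
    ultimately show False using a by linarith
  qed
  with E_trivial have "E \<in> null_sets M" by (simp add: null_sets_def emeasure_eq_measure)
  then show ?thesis by (rule AE_mp[OF AE_not_in]) (auto simp: E_def)
qed

lemma AE_eventually_visit_freq_less:
  assumes "C \<in> sets M" "prob C < b"
  shows "AE x in M. eventually (\<lambda>n. visit_freq C x n < b) sequentially"
proof -
  have "AE x in M. limsup (\<lambda>n. ereal (visit_freq C x n)) \<le> (prob C + b) / 2"
    using assms by (intro AE_limsup_visit_freq_le) auto
  then show ?thesis
  proof eventually_elim
    case (elim x)
    also have "ereal ((prob C + b) / 2) < ereal b" using assms(2) by simp
    finally show ?case by (auto dest: Limsup_lessD)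
  qed
qed

lemma AE_eventually_visit_freq_greater:
  assumes C[measurable]: "C \<in> sets M" and "b < prob C"
  shows "AE x in M. eventually (\<lambda>n. b < visit_freq C x n) sequentially"
proof -
  have compl: "visit_freq (space M - C) x n = 1 - visit_freq C x n" if "x \<in> space M" "n \<ge> 1" for x n
  proof -
    have "(\<lambda>i. indicator (space M - C) ((T ^^ i) x)) = (\<lambda>i. 1 - indicator C ((T ^^ i) x) :: real)"
      using funpow_in_space[OF that(1)] by (auto simp: indicator_def)
    then show ?thesis using that(2) by (simp add: visit_freq_eq_cesaro_mean cesaro_mean_diff cesaro_mean_const)
  qed
  have "AE x in M. eventually (\<lambda>n. visit_freq (space M - C) x n < 1 - b) sequentially"
    using assms prob_compl[OF C] by (intro AE_eventually_visit_freq_less) auto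
  then show ?thesis
  proof (rule AE_mp, intro AE_I2 impI)
    fix x assume x: "x \<in> space M"
      and ev: "eventually (\<lambda>n. visit_freq (space M - C) x n < 1 - b) sequentially"
    show "eventually (\<lambda>n. b < visit_freq C x n) sequentially"
      using ev eventually_ge_at_top[of 1] by eventually_elim (use compl[OF x] in auto)
  qed
qed

lemma AE_visit_freq_tendsto:
  assumes "C \<in> sets M"
  shows "AE x in M. (\<lambda>n. visit_freq C x n) \<longlonglongrightarrow> prob C"
proof -
  have "AE x in M. \<forall>k::nat. eventually (\<lambda>n. visit_freq C x n < prob C + inverse (Suc k)) sequentially
      \<and> eventually (\<lambda>n. prob C - inverse (Suc k) < visit_freq C x n) sequentially"
    unfolding AE_all_countable
    by (intro allI AE_conjI AE_eventually_visit_freq_less AE_eventually_visit_freq_greater assms) auto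
  then show ?thesis
  proof eventually_elim
    case (elim x)
    show ?case
    proof (rule order_tendstoI)
      fix a assume "a < prob C"
      then have "0 < prob C - a" by simp
      then obtain k where "inverse (Suc k) < prob C - a" using reals_Archimedean by blast
      then show "eventually (\<lambda>n. a < visit_freq C x n) sequentially"
        using elim[rule_format, of k] by (auto elim: eventually_mono)
    next
      fix a assume "prob C < a"
      then have "0 < a - prob C" by simp
      then obtain k where "inverse (Suc k) < a - prob C" using reals_Archimedean by blast
      then show "eventually (\<lambda>n. visit_freq C x n < a) sequentially"
        using elim[rule_format, of k] by (auto elim: eventually_mono)
    qed
  qed
qed

lemma cesaro_if_ergodic:
  assumes [measurable]: "B \<in> sets M" "C \<in> sets M"
  shows "cesaro M T B C"
proof -
  have "(\<lambda>n. \<integral>x. indicator B x * visit_freq C x n \<partial>M) \<longlonglongrightarrow> (\<integral>x. indicator B x * prob C \<partial>M)"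
  proof (rule integral_dominated_convergence[where w="\<lambda>x. 1"])
    show "AE x in M. (\<lambda>n. indicator B x * visit_freq C x n) \<longlonglongrightarrow> indicator B x * prob C"
      using AE_visit_freq_tendsto[OF assms(2)] by eventually_elim (intro tendsto_mult tendsto_const)
    show "AE x in M. norm (indicator B x * visit_freq C x n) \<le> 1" for n
      using visit_freq_nonneg[of C _ n] visit_freq_le_1[of C _ n] by (intro AE_I2) (auto simp: indicator_def)
  qed simp_all
  then show ?thesis unfolding cesaro_iff_corr by (simp add: integral_indicator_visit_freq)
qed

end

lemma mpt_imp_ergodic_mpt: "mpt M T \<Longrightarrow> ergodic M T \<Longrightarrow> ergodic_mpt M T"
  unfolding ergodic_mpt_def ergodic_mpt_axioms_def by simp

section \<open>Weak mixing\<close>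

lemma funpow_map_prod:
  fixes f :: "'a \<Rightarrow> 'a" and g :: "'b \<Rightarrow> 'b"
  shows "map_prod f g ^^ n = map_prod (f ^^ n) (g ^^ n)"
  by (induction n) (auto simp: fun_eq_iff funpow_swap1)

lemma weakly_mixing_iff_ergodic_map_prod: "weakly_mixing M T \<longleftrightarrow> ergodic (M \<Otimes>\<^sub>M M) (map_prod T T)"
  unfolding weakly_mixing_def map_prod_def ..

lemma (in prob_space) measure_pair_Times:
  assumes "A \<in> sets M" "B \<in> sets M"
  shows "measure (M \<Otimes>\<^sub>M M) (A \<times> B) = prob A * prob B"
proof -
  interpret sigma_finite_measure M by (rule prob_space_imp_sigma_finite) (rule prob_space_axioms)
  have "emeasure (M \<Otimes>\<^sub>M M) (A \<times> B) = ennreal (prob A * prob B)"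
    using assms by (simp add: emeasure_pair_measure_Times emeasure_eq_measure ennreal_mult'')
  then show ?thesis by (simp add: measure_def)
qed

context mpt
begin

lemma mpt_pair: "mpt (M \<Otimes>\<^sub>M M) (map_prod T T)"
proof -
  have meas: "map_prod T T \<in> M \<Otimes>\<^sub>M M \<rightarrow>\<^sub>M M \<Otimes>\<^sub>M M" unfolding map_prod_def by measurable
  have distr_pair: "distr (M \<Otimes>\<^sub>M M) (M \<Otimes>\<^sub>M M) (map_prod T T) = M \<Otimes>\<^sub>M M"
    using pair_measure_distr[OF T_measurable T_measurable] prob_space_imp_sigma_finite[OF prob_space_axioms]
    by (simp add: distr_T map_prod_def)
  have "measure (M \<Otimes>\<^sub>M M) (map_prod T T -` A \<inter> space (M \<Otimes>\<^sub>M M)) = measure (M \<Otimes>\<^sub>M M) A"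
    if "A \<in> sets (M \<Otimes>\<^sub>M M)" for A
    using measure_distr[OF meas that] distr_pair by simp
  moreover have "prob_space (M \<Otimes>\<^sub>M M)" by (intro prob_space_pair prob_space_axioms)
  ultimately show ?thesis using meas unfolding mpt_def mpt_axioms_def by blast
qed

lemma corr_pair_Times:
  assumes "B1 \<in> sets M" "B2 \<in> sets M" "C1 \<in> sets M" "C2 \<in> sets M"
  shows "mpt.corr (M \<Otimes>\<^sub>M M) (map_prod T T) (B1 \<times> B2) (C1 \<times> C2) = (\<lambda>i. corr B1 C1 i * corr B2 C2 i)"
proof -
  interpret pair: mpt "M \<Otimes>\<^sub>M M" "map_prod T T" by (rule mpt_pair)
  have "(B1 \<times> B2) \<inter> ((map_prod T T ^^ i) -` (C1 \<times> C2) \<inter> space (M \<Otimes>\<^sub>M M)) =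
      (B1 \<inter> ((T ^^ i) -` C1 \<inter> space M)) \<times> (B2 \<inter> ((T ^^ i) -` C2 \<inter> space M))" for i
    by (auto simp: funpow_map_prod space_pair_measure)
  then show ?thesis using assms by (simp add: fun_eq_iff pair.corr_def corr_def measure_pair_Times)
qed

lemma ergodic_if_weakly_mixing:
  assumes "weakly_mixing M T"
  shows "ergodic M T"
  unfolding ergodic_def
proof (intro ballI impI)
  fix A assume A: "A \<in> sets M" and inv: "T -` A \<inter> space M = A"
  have "x \<in> space M \<Longrightarrow> T x \<in> A \<longleftrightarrow> x \<in> A" for x using inv by blast
  then have "map_prod T T -` (A \<times> space M) \<inter> space (M \<Otimes>\<^sub>M M) = A \<times> space M"
    using measurable_space[OF T_measurable] sets.sets_into_space[OF A] by (auto simp: space_pair_measure)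
  then have "measure (M \<Otimes>\<^sub>M M) (A \<times> space M) = 0 \<or> measure (M \<Otimes>\<^sub>M M) (A \<times> space M) = 1"
    using assms A unfolding weakly_mixing_iff_ergodic_map_prod ergodic_def by auto
  then show "prob A = 0 \<or> prob A = 1"
    using A by (simp add: measure_pair_Times prob_space)
qed

text \<open>Ergodicity of \<open>T \<times> T\<close> on \<open>B \<times> B\<close> and \<open>C \<times> C\<close> gives the mean of \<open>corr B C\<^sup>2\<close>,
  that of \<open>T\<close> the mean of \<open>corr B C\<close>; together they control the mean square deviation.\<close>
lemma strongly_cesaro_corr_if_weakly_mixing:
  assumes wm: "weakly_mixing M T" and B: "B \<in> sets M" and C: "C \<in> sets M"
  shows "strongly_cesaro_tendsto (corr B C) (prob B * prob C)"
proof -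
  interpret ergodic_mpt M T
    by (intro mpt_imp_ergodic_mpt ergodic_if_weakly_mixing wm) unfold_locales
  interpret pair: ergodic_mpt "M \<Otimes>\<^sub>M M" "map_prod T T"
    using wm by (intro mpt_imp_ergodic_mpt mpt_pair) (simp add: weakly_mixing_iff_ergodic_map_prod)
  have "(\<lambda>n. cesaro_mean (pair.corr (B \<times> B) (C \<times> C)) n) \<longlonglongrightarrow>
      measure (M \<Otimes>\<^sub>M M) (B \<times> B) * measure (M \<Otimes>\<^sub>M M) (C \<times> C)"
    using B C by (intro pair.cesaro_if_ergodic[unfolded pair.cesaro_iff_corr]) auto
  moreover have "pair.corr (B \<times> B) (C \<times> C) = (\<lambda>i. (corr B C i)\<^sup>2)"
    using corr_pair_Times[OF B B C C] by (simp add: power2_eq_square)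
  ultimately have "(\<lambda>n. cesaro_mean (\<lambda>i. (corr B C i)\<^sup>2) n) \<longlonglongrightarrow> (prob B * prob C)\<^sup>2"
    using B C by (simp add: measure_pair_Times power2_eq_square mult_ac)
  then show ?thesis
    using cesaro_if_ergodic[OF B C] unfolding cesaro_iff_corr
    by (intro strongly_cesaro_tendsto_if_square cesaro_mean_square_dev_tendsto_0)
qed

lemma weakly_mixing_if_strongly_cesaro_corr:
  assumes strong: "\<And>B C. B \<in> sets M \<Longrightarrow> C \<in> sets M \<Longrightarrow> strongly_cesaro_tendsto (corr B C) (prob B * prob C)"
  shows "weakly_mixing M T"
proof -
  interpret pair: mpt "M \<Otimes>\<^sub>M M" "map_prod T T" by (rule mpt_pair)
  let ?G = "{a \<times> b | a b. a \<in> sets M \<and> b \<in> sets M}"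
  have G: "Int_stable ?G" "?G \<subseteq> Pow (space (M \<Otimes>\<^sub>M M))"
      "sets (M \<Otimes>\<^sub>M M) = sigma_sets (space (M \<Otimes>\<^sub>M M)) ?G" "space (M \<Otimes>\<^sub>M M) \<in> ?G"
    unfolding space_pair_measure
    by (auto simp: Int_stable_pair_measure_generator sets_pair_measure dest: sets.sets_into_space)
  have rectangles: "cesaro (M \<Otimes>\<^sub>M M) (map_prod T T) X Y" if XY: "X \<in> ?G" "Y \<in> ?G" for X Y
  proof -
    obtain B1 B2 C1 C2 where XY: "X = B1 \<times> B2" "Y = C1 \<times> C2"
      and sets: "B1 \<in> sets M" "B2 \<in> sets M" "C1 \<in> sets M" "C2 \<in> sets M"
      using XY by blast
    have "strongly_cesaro_tendsto (\<lambda>i. corr B1 C1 i * corr B2 C2 i) ((prob B1 * prob C1) * (prob B2 * prob C2))"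
      using sets corr_nonneg corr_le_1
      by (intro strongly_cesaro_tendsto_mult[where K=1] strong) (auto intro: mult_le_one)
    then show ?thesis
      unfolding pair.cesaro_iff_corr XY using sets
      by (simp add: corr_pair_Times measure_pair_Times tendsto_cesaro_mean_if_strongly mult_ac)
  qed
  show ?thesis unfolding weakly_mixing_iff_ergodic_map_prod ergodic_def
  proof (intro ballI impI)
    fix A assume A: "A \<in> sets (M \<Otimes>\<^sub>M M)" and inv: "map_prod T T -` A \<inter> space (M \<Otimes>\<^sub>M M) = A"
    show "measure (M \<Otimes>\<^sub>M M) A = 0 \<or> measure (M \<Otimes>\<^sub>M M) A = 1"
      by (rule pair.invariant_trivial_if_cesaro[OF A inv pair.cesaro_if_cesaro_on_generator[OF G rectangles A A]])
  qed
qed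

lemma weakly_mixing_iff_strongly_cesaro_corr:
  "weakly_mixing M T \<longleftrightarrow>
    (\<forall>B\<in>sets M. \<forall>C\<in>sets M. strongly_cesaro_tendsto (corr B C) (prob B * prob C))"
  using strongly_cesaro_corr_if_weakly_mixing weakly_mixing_if_strongly_cesaro_corr by blast

lemma cesaro_if_strongly_cesaro_corr:
  "strongly_cesaro_tendsto (corr B C) (prob B * prob C) \<Longrightarrow> cesaro M T B C"
  unfolding cesaro_iff_corr by (rule tendsto_cesaro_mean_if_strongly)

lemma cesaro_pow_if_strongly_cesaro_corr:
  assumes strong: "strongly_cesaro_tendsto (corr B C) (prob B * prob C)" and B: "B \<in> sets M" and r: "0 < r"
  shows "cesaro_pow M T r B C"
proof -
  have c: "prob B * prob C \<in> {0..1}" by (auto intro: mult_le_one)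
  have "continuous_on {0..1} (\<lambda>x::real. x powr r)"
    using r by (intro continuous_on_powr' continuous_on_id continuous_on_const) auto
  then have cont: "continuous (at (prob B * prob C) within {0..1}) (\<lambda>x. x powr r)"
    using c by (simp add: continuous_on_eq_continuous_within)
  have bound: "\<bar>x powr r - (prob B * prob C) powr r\<bar> \<le> 1" if "x \<in> {0..1}" for x
  proof -
    have "x powr r \<le> 1" "(prob B * prob C) powr r \<le> 1" using that c r by (auto intro: powr_le1)
    moreover have "0 \<le> x powr r" "0 \<le> (prob B * prob C) powr r" by simp_all
    ultimately show ?thesis unfolding abs_le_iff by linarith
  qed
  have "corr B C i \<in> {0..1}" for i using B corr_nonneg corr_le_1 by simp
  then have "strongly_cesaro_tendsto (\<lambda>i. corr B C i powr r) ((prob B * prob C) powr r)"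
    by (rule strongly_cesaro_tendsto_comp[OF strong cont _ bound])
  then show ?thesis unfolding cesaro_pow_iff_corr by (rule tendsto_cesaro_mean_if_strongly)
qed

lemma strongly_cesaro_corr_if_cesaro_pow:
  assumes "cesaro M T B C" "cesaro_pow M T r B C" "0 < r" "r \<le> 1/2" "B \<in> sets M"
  shows "strongly_cesaro_tendsto (corr B C) (prob B * prob C)"
proof (rule strongly_cesaro_tendsto_if_sqrt)
  show "(\<lambda>n. cesaro_mean (\<lambda>i. sqrt (corr B C i)) n) \<longlonglongrightarrow> sqrt (prob B * prob C)"
    using assms corr_nonneg unfolding cesaro_iff_corr cesaro_pow_iff_corr
    by (intro cesaro_sqrt_tendsto_if_powr) auto
qed (use assms corr_nonneg corr_le_1 in \<open>auto simp: cesaro_iff_corr intro: mult_le_one\<close>)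

lemma weakly_mixing_iff_cesaro_pow:
  "weakly_mixing M T \<longleftrightarrow> (\<forall>r>0. \<forall>B\<in>sets M. \<forall>C\<in>sets M. cesaro_pow M T r B C)"
proof
  assume pow: "\<forall>r>0. \<forall>B\<in>sets M. \<forall>C\<in>sets M. cesaro_pow M T r B C"
  show "weakly_mixing M T"
  proof (rule weakly_mixing_if_strongly_cesaro_corr)
    fix B C assume B: "B \<in> sets M" and C: "C \<in> sets M"
    have "cesaro M T B C"
      using pow[rule_format, of 1 B C] B C unfolding cesaro_pow_def cesaro_def by simp
    then show "strongly_cesaro_tendsto (corr B C) (prob B * prob C)"
      by (rule strongly_cesaro_corr_if_cesaro_pow[where r="1/2"]) (use pow B C in auto)
  qed
qed (simp add: weakly_mixing_iff_strongly_cesaro_corr cesaro_pow_if_strongly_cesaro_corr)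

lemma weakly_mixing_iff_cesaro_and_cesaro_pow:
  "weakly_mixing M T \<longleftrightarrow> (\<forall>B\<in>sets M. \<forall>C\<in>sets M. cesaro M T B C \<and>
      (\<exists>r. 0 < r \<and> r \<le> 1/2 \<and> cesaro_pow M T r B C))"
proof
  assume "weakly_mixing M T"
  then show "\<forall>B\<in>sets M. \<forall>C\<in>sets M. cesaro M T B C \<and> (\<exists>r. 0 < r \<and> r \<le> 1/2 \<and> cesaro_pow M T r B C)"
    unfolding weakly_mixing_iff_strongly_cesaro_corr
    by (auto intro!: exI[of _ "1/2"] cesaro_if_strongly_cesaro_corr cesaro_pow_if_strongly_cesaro_corr)
next
  assume H: "\<forall>B\<in>sets M. \<forall>C\<in>sets M. cesaro M T B C \<and> (\<exists>r. 0 < r \<and> r \<le> 1/2 \<and> cesaro_pow M T r B C)"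
  show "weakly_mixing M T"
  proof (rule weakly_mixing_if_strongly_cesaro_corr)
    fix B C assume B: "B \<in> sets M" and C: "C \<in> sets M"
    with H obtain r where "cesaro M T B C" "cesaro_pow M T r B C" "0 < r" "r \<le> 1/2" by blast
    with B show "strongly_cesaro_tendsto (corr B C) (prob B * prob C)"
      by (intro strongly_cesaro_corr_if_cesaro_pow)
  qed
qed

lemma weakly_mixing_iff_ergodic_and_cesaro_sqrt:
  "weakly_mixing M T \<longleftrightarrow> ergodic M T \<and> (\<forall>B\<in>sets M. \<forall>C\<in>sets M. cesaro_pow M T (1/2) B C)"
proof
  assume H: "ergodic M T \<and> (\<forall>B\<in>sets M. \<forall>C\<in>sets M. cesaro_pow M T (1/2) B C)"
  then interpret ergodic_mpt M T by (intro mpt_imp_ergodic_mpt mpt_axioms) simp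
  show "weakly_mixing M T"
  proof (rule weakly_mixing_if_strongly_cesaro_corr)
    fix B C assume B: "B \<in> sets M" and C: "C \<in> sets M"
    then show "strongly_cesaro_tendsto (corr B C) (prob B * prob C)"
      using H by (intro strongly_cesaro_corr_if_cesaro_pow[where r="1/2"] cesaro_if_ergodic) auto
  qed
qed (simp add: ergodic_if_weakly_mixing weakly_mixing_iff_strongly_cesaro_corr cesaro_pow_if_strongly_cesaro_corr)

end

theorem proposition6p3:
  fixes M :: "'a measure" and T :: "'a \<Rightarrow> 'a"
  assumes "mps M T"
  shows "(weakly_mixing M T \<longleftrightarrow>
            (\<forall>r>0. \<forall>B\<in>sets M. \<forall>C\<in>sets M. cesaro_pow M T r B C))
       \<and> (weakly_mixing M T \<longleftrightarrow>
            (\<forall>B\<in>sets M. \<forall>C\<in>sets M. cesaro M T B C \<and>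
               (\<exists>r. 0 < r \<and> r \<le> 1/2 \<and> cesaro_pow M T r B C)))
       \<and> (weakly_mixing M T \<longleftrightarrow>
            ergodic M T \<and> (\<forall>B\<in>sets M. \<forall>C\<in>sets M. cesaro_pow M T (1/2) B C))"
proof -
  interpret mpt M T using assms by (simp add: mpt_iff_mps)
  show ?thesis
    using weakly_mixing_iff_cesaro_pow weakly_mixing_iff_cesaro_and_cesaro_pow
      weakly_mixing_iff_ergodic_and_cesaro_sqrt by blast
qed

end
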